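(* Consider the control system $\dot x=f(x,u)$, $t\ge0$, where $f\colon\mathcal{X}\times\mathcal{U}\to\mathbb{R}^n$ is continuous on a neighborhood $\mathcal{X}\times\mathcal{U}\subseteq\mathbb{R}^n\times\mathbb{R}^m$ of the origin and $f(0,0)=0$. Let $d$ be a nonnegative function defined on a neighborhood of $0\in\mathbb{R}^n$. Suppose the system is locally asymptotically stabilizable and $u$ is a stabilizing feedback (in the sense described in the context) satisfying $\|u(x)\|\le d(x)$ for all $x$ with $\|x\|$ sufficiently small. Write $F_u(x):=f(x,u(x))$, $$g(r):=\Gamma_0\big(f(\mathbb{B}_r(0,0))\big),\qquad h(r):=\sup_{y\in\mathbb{B}_r(0)}\|F_u^{-1}(y)\|.$$ Then $$r\ \le\ g\left(\sqrt{\|d\|_{\mathbb{B}_{h(r)}(0)}^2+h(r)^2}\right)\quad\text{for all sufficiently small } r>0.$$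
   Context: $\mathbb{B}_r(z)$ denotes the open ball of radius $r$ centered at $z$; on $\mathbb{R}^n\times\mathbb{R}^m$ the norm is $\|(x,u)\|=\sqrt{\|x\|^2+\|u\|^2}$. For a set $K$ in a normed space and a point $z^*$, the inradius is $\Gamma_{z^*}(K)=\sup\{\rho\ge0:\mathbb{B}_\rho(z^* )\subseteq K\}$. For a function $d$, $\|d\|_{\mathbb{B}_\rho(0)}:=\sup_{x\in\mathbb{B}_\rho(0)}d(x)$. A stabilizing feedback is a map $u\colon\mathcal{O}\to\mathcal{U}$ on a neighborhood $\mathcal{O}\subseteq\mathcal{X}$ of the origin with $u(0)=0$ such that the origin is a locally asymptotically stable equilibrium (Lyapunov stable and locally attractive) of the closed-loop system $\dot x=f(x,u(x))$, and such that $x\mapsto f(x,u(x))$ is continuous and $\dot x=f(x,u(x))$ has a unique solution for all $t$ from every initial condition in a neighborhood of the origin ($u$ itself need not be continuous); the system is locally asymptotically stabilizable if such a $u$ exists. For such $u$, $F_u$ restricted to a suitable neighborhood of the origin is a homeomorphism onto a neighborhood of the origin, and $F_u^{-1}$ denotes this local inverse. *)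

theory Defs
  imports "HOL-Analysis.Analysis"
begin

definition eball :: "'a::metric_space \<Rightarrow> ereal \<Rightarrow> 'a set" where
  "eball z R = {w. ereal (dist z w) < R}"

definition inradius :: "'a::metric_space \<Rightarrow> 'a set \<Rightarrow> ereal" where
  "inradius z K = Sup {ereal \<rho> | \<rho>. \<rho> \<ge> 0 \<and> ball z \<rho> \<subseteq> K}"

definition sup_on_ball :: "('a::real_normed_vector \<Rightarrow> real) \<Rightarrow> ereal \<Rightarrow> ereal" where
  "sup_on_ball d \<rho> = (SUP x\<in>eball 0 \<rho>. ereal (d x))"

definition ereal_hyp :: "ereal \<Rightarrow> ereal \<Rightarrow> ereal" where
  "ereal_hyp a b = (if a = \<infinity> \<or> b = \<infinity> then \<infinity>
      else ereal (sqrt ((real_of_ereal a)\<^sup>2 + (real_of_ereal b)\<^sup>2)))"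

definition is_solution :: "('a::real_normed_vector \<Rightarrow> 'a) \<Rightarrow> 'a set \<Rightarrow> (real \<Rightarrow> 'a) \<Rightarrow> bool" where
  "is_solution F Ob \<phi> \<longleftrightarrow>
     (\<forall>t\<ge>0. \<phi> t \<in> Ob \<and> (\<phi> has_vector_derivative F (\<phi> t)) (at t within {0..}))"

definition stabilizing_feedback ::
  "('n::real_normed_vector \<times> 'm::real_normed_vector \<Rightarrow> 'n) \<Rightarrow> 'n set \<Rightarrow> 'm set \<Rightarrow> 'n set \<Rightarrow> ('n \<Rightarrow> 'm) \<Rightarrow> bool" where
  "stabilizing_feedback f X U Ob u \<longleftrightarrow>
     Ob \<subseteq> X \<and> 0 \<in> interior Ob \<and> u ` Ob \<subseteq> U \<and> u 0 = 0 \<and>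
     continuous_on Ob (\<lambda>x. f (x, u x)) \<and>
     (\<exists>N. 0 \<in> interior N \<and>
        (\<forall>x0\<in>N. (\<exists>\<phi>. is_solution (\<lambda>x. f (x, u x)) Ob \<phi> \<and> \<phi> 0 = x0) \<and>
                 (\<forall>\<phi> \<psi>. is_solution (\<lambda>x. f (x, u x)) Ob \<phi> \<and> \<phi> 0 = x0 \<and>
                         is_solution (\<lambda>x. f (x, u x)) Ob \<psi> \<and> \<psi> 0 = x0 \<longrightarrow>
                         (\<forall>t\<ge>0. \<phi> t = \<psi> t)))) \<and>
     (\<forall>\<epsilon>>0. \<exists>\<delta>>0. \<forall>\<phi>. is_solution (\<lambda>x. f (x, u x)) Ob \<phi> \<and> norm (\<phi> 0) < \<delta> \<longrightarrow>
                       (\<forall>t\<ge>0. norm (\<phi> t) < \<epsilon>)) \<and>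
     (\<exists>\<eta>>0. \<forall>\<phi>. is_solution (\<lambda>x. f (x, u x)) Ob \<phi> \<and> norm (\<phi> 0) < \<eta> \<longrightarrow>
                  (\<phi> \<longlongrightarrow> 0) at_top)"

end

theory Submission
  imports Defs "HOL-Homology.Invariance_of_Domain"
begin

text \<open>For small \<open>r\<close> the local inverse of \<open>F\<^sub>u\<close> maps the ball \<open>B\<^sub>r(0)\<close> into the
  region where \<open>\<parallel>u x\<parallel> \<le> d x\<close>. So every \<open>y\<close> in \<open>B\<^sub>r(0)\<close> is \<open>f (x, u x)\<close> for
  \<open>x = F\<^sub>u\<^sup>-\<^sup>1 y\<close>, where \<open>\<parallel>x\<parallel> \<le> h(r)\<close> and \<open>\<parallel>u x\<parallel>\<close> is at most the supremum of \<open>d\<close>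
  on the ball of radius \<open>h(r)\<close>; hence \<open>B\<^sub>r(0)\<close> lies in the \<open>f\<close>-image of the ball of the claimed
  radius. The subtle point is that \<open>(x, u x)\<close> must lie in the open ball, i.e. \<open>\<parallel>x\<parallel> < h(r)\<close>
  strictly: by invariance of domain \<open>F\<^sub>u\<^sup>-\<^sup>1(B\<^sub>r(0))\<close> is open, and an open set has no
  point of maximal norm.\<close>

lemma open_ex_norm_gt:
  fixes x :: "'a::{real_normed_vector, perfect_space}"
  assumes "open S" "x \<in> S"
  shows "\<exists>x'\<in>S. norm x < norm x'"
proof -
  obtain e where e: "e > 0" "ball x e \<subseteq> S"
    using assms open_contains_ball by blast
  show ?thesis
  proof (cases "x = 0")
    case True
    obtain v :: 'a where "norm v = e / 2"
      using vector_choose_size[of "e / 2"] e by auto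
    then show ?thesis
      using True e by (intro bexI[of _ v]) (auto simp: dist_norm)
  next
    case False
    define x' where "x' = (1 + e / (2 * norm x)) *\<^sub>R x"
    have "dist x x' = norm (x' - x)"
      by (simp add: dist_norm norm_minus_commute)
    also have "x' - x = (e / (2 * norm x)) *\<^sub>R x"
      by (simp add: x'_def algebra_simps)
    finally have "dist x x' = e / 2"
      using False e by simp
    moreover have "norm x' = norm x + e / 2"
      using False e by (simp add: x'_def distrib_right)
    ultimately show ?thesis
      using e by (intro bexI[of _ x']) auto
  qed
qed

lemma norm_less_SUP_norm_open:
  fixes x :: "'a::{real_normed_vector, perfect_space}"
  assumes "open S" "x \<in> S"
  shows "ereal (norm x) < (SUP z\<in>S. ereal (norm z))"
proof -
  obtain x' where "x' \<in> S" "norm x < norm x'"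
    using open_ex_norm_gt[OF assms] by blast
  then show ?thesis
    by (meson SUP_upper ereal_less(2) less_ereal.simps(1) order_less_le_trans)
qed

lemma ereal_le_inradius:
  assumes "0 \<le> r" "ball z r \<subseteq> K"
  shows "ereal r \<le> inradius z K"
  unfolding inradius_def using assms by (intro Sup_upper) auto

lemma norm_Pair_less_ereal_hyp:
  assumes "ereal (norm x) < h" "ereal (norm v) \<le> D"
  shows "ereal (norm (x, v)) < ereal_hyp D h"
proof (cases "h = \<infinity> \<or> D = \<infinity>")
  case True
  then show ?thesis by (auto simp: ereal_hyp_def)
next
  case False
  with assms obtain h' D' where hD: "h = ereal h'" "D = ereal D'"
    by (cases h; cases D) auto
  with assms have "(norm x)\<^sup>2 < h'\<^sup>2" "(norm v)\<^sup>2 \<le> D'\<^sup>2"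
    by (auto intro: power_strict_mono power_mono)
  then have "sqrt ((norm x)\<^sup>2 + (norm v)\<^sup>2) < sqrt (D'\<^sup>2 + h'\<^sup>2)"
    by simp
  then show ?thesis
    by (simp add: hD ereal_hyp_def norm_Pair)
qed

lemma radius_le_inradius_image_feedback:
  fixes f :: "'a::euclidean_space \<times> 'b::real_normed_vector \<Rightarrow> 'a"
    and Finv :: "'a \<Rightarrow> 'a" and r :: real
  defines "h \<equiv> SUP y\<in>ball 0 r. ereal (norm (Finv y))"
  assumes "0 \<le> r"
    and cont: "continuous_on (ball 0 r) Finv"
    and right_inverse: "\<And>y. y \<in> ball 0 r \<Longrightarrow> f (Finv y, u (Finv y)) = y"
    and domain: "\<And>y. y \<in> ball 0 r \<Longrightarrow> (Finv y, u (Finv y)) \<in> X \<times> U"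
    and bound: "\<And>y. y \<in> ball 0 r \<Longrightarrow> norm (u (Finv y)) \<le> d (Finv y)"
  shows "ereal r \<le> inradius 0 (f ` (eball (0, 0) (ereal_hyp (sup_on_ball d h) h) \<inter> X \<times> U))"
proof (rule ereal_le_inradius[OF \<open>0 \<le> r\<close>], rule subsetI)
  fix y :: 'a
  assume y: "y \<in> ball 0 r"
  define x where "x = Finv y"
  have "inj_on Finv (ball 0 r)"
    by (metis right_inverse inj_onI)
  then have "open (Finv ` ball 0 r)"
    using cont by (intro invariance_of_domain) auto
  then have x_h: "ereal (norm x) < h"
    using norm_less_SUP_norm_open y
    by (fastforce simp: h_def x_def image_image)
  then have "ereal (d x) \<le> sup_on_ball d h"
    unfolding sup_on_ball_def by (intro SUP_upper) (simp add: eball_def)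
  moreover have "norm (u x) \<le> d x"
    using bound[OF y] by (simp add: x_def)
  ultimately have "ereal (norm (u x)) \<le> sup_on_ball d h"
    by (meson ereal_less_eq(3) order_trans)
  with x_h have "ereal (dist (0, 0) (x, u x)) < ereal_hyp (sup_on_ball d h) h"
    by (simp add: dist_norm norm_Pair_less_ereal_hyp)
  then have "(x, u x) \<in> eball (0, 0) (ereal_hyp (sup_on_ball d h) h) \<inter> X \<times> U"
    using domain[OF y] by (simp add: eball_def x_def)
  then show "y \<in> f ` (eball (0, 0) (ereal_hyp (sup_on_ball d h) h) \<inter> X \<times> U)"
    using right_inverse[OF y] by (force simp: x_def)
qed

theorem theorem4:
  fixes f :: "(real^'n) \<times> (real^'m) \<Rightarrow> real^'n"
    and X :: "(real^'n) set" and U :: "(real^'m) set"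
    and d :: "real^'n \<Rightarrow> real" and Dd :: "(real^'n) set"
    and u :: "real^'n \<Rightarrow> real^'m" and Ob :: "(real^'n) set"
    and V W :: "(real^'n) set" and Finv :: "real^'n \<Rightarrow> real^'n"
  assumes X: "0 \<in> interior X" and U: "0 \<in> interior U"
    and f_cont: "continuous_on (X \<times> U) f"
    and f0: "f (0, 0) = 0"
    and Dd: "0 \<in> interior Dd" and d_nonneg: "\<forall>x\<in>Dd. d x \<ge> 0"
    and stab: "stabilizing_feedback f X U Ob u"
    and u_bound: "\<exists>\<delta>>0. \<forall>x. norm x < \<delta> \<longrightarrow> norm (u x) \<le> d x"
    and V: "0 \<in> interior V" "V \<subseteq> Ob" and W: "0 \<in> interior W"
    and hom: "homeomorphism V W (\<lambda>x. f (x, u x)) Finv"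
  shows "\<forall>\<^sub>F r in at_right 0.
           (let h = (SUP y\<in>ball 0 r. ereal (norm (Finv y)));
                g = (\<lambda>\<rho>. inradius 0 (f ` (eball (0, 0) \<rho> \<inter> X \<times> U)))
            in ereal r \<le> g (ereal_hyp (sup_on_ball d h) h))"
proof -
  obtain \<delta> where \<delta>: "\<delta> > 0" "\<And>x. norm x < \<delta> \<Longrightarrow> norm (u x) \<le> d x"
    using u_bound by blast
  have Ob: "Ob \<subseteq> X" "u ` Ob \<subseteq> U" "u 0 = 0"
    using stab unfolding stabilizing_feedback_def by auto
  have Finv: "Finv ` W = V" "continuous_on W Finv"
    "\<And>y. y \<in> W \<Longrightarrow> f (Finv y, u (Finv y)) = y" "\<And>x. x \<in> V \<Longrightarrow> Finv (f (x, u x)) = x"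
    using hom unfolding homeomorphism_def by auto
  have "Finv 0 = 0"
    using Finv(4)[of 0] V(1) interior_subset f0 Ob(3) by force
  moreover have "isCont Finv 0"
    using continuous_on_interior[OF Finv(2) W] .
  ultimately obtain e0 where e0: "e0 > 0" "\<And>y. norm y < e0 \<Longrightarrow> norm (Finv y) < \<delta>"
    using \<delta>(1) unfolding continuous_at_eps_delta by (metis dist_0_norm dist_commute)
  obtain e1 where e1: "e1 > 0" "ball 0 e1 \<subseteq> W"
    using W by (meson mem_interior)
  show ?thesis
  proof (rule eventually_at_rightI[of 0 "min e0 e1"])
    fix r assume r: "r \<in> {0<..<min e0 e1}"
    then have ball: "ball 0 r \<subseteq> W"
      using e1 by auto
    then have "Finv y \<in> Ob" if "y \<in> ball 0 r" for y
      using that Finv(1) V(2) by blast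
    then show "let h = (SUP y\<in>ball 0 r. ereal (norm (Finv y)));
                   g = (\<lambda>\<rho>. inradius 0 (f ` (eball (0, 0) \<rho> \<inter> X \<times> U)))
               in ereal r \<le> g (ereal_hyp (sup_on_ball d h) h)"
      unfolding Let_def using r ball Ob e0(2)
      by (intro radius_le_inradius_image_feedback[where u = u]
          continuous_on_subset[OF Finv(2)] Finv(3) \<delta>(2)) auto
  qed (use e0 e1 in auto)
qed

end
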